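(* Let $n\ge2$ and $\mathsf u\in\mathcal S_n$. Then $\mathsf r^{\mathsf u}$ is a tree-like factorization of $\lambda_n$.
   Context: $\widetilde S_n$ is the group, under composition $(vw)(k)=v(w(k))$, of bijections $w:\mathbb Z\to\mathbb Z$ with $w(i+n)=w(i)+n$ and $\sum_{i=1}^n w(i)=\binom{n+1}2$. For $i\not\equiv j\pmod n$, $(\!(i,j)\!)$ swaps $i+kn$ and $j+kn$ for all $k$; $(\!(i,j)\!)=(\!(j,i)\!)=(\!(i+kn,j+kn)\!)$; $s_i=(\!(i,i+1)\!)$, $i\in\{0,\dots,n-1\}$. $\lambda_n(k)=k+n$ for $k\not\equiv0\pmod n$, $\lambda_n(k)=k-n(n-1)$ for $k\equiv0\pmod n$; its reflection length is $2n-2$, and $\textsc{fact}(\lambda_n)$ is the set of sequences of $2n-2$ reflections with product $\lambda_n$. A sequence $[r_1,\dots,r_{2n-2}]\in\textsc{fact}(\lambda_n)$ is tree-like if one can write $r_k=(\!(a_{k-1},b_k)\!)$ with integers $a_{k-1}<b_k$ ($1\le k\le 2n-2$) and $a_k\equiv b_k\pmod n$ ($1\le k\le 2n-3$). $\bm\lambda_n$ is the word $[s_0,\dots,s_{n-1}]$ repeated $n-1$ times with $j$-th letter $\sigma_j=s_{(j-1)\bmod n}$. A subword is $\mathsf u=[u_1,\dots,u_{n(n-1)}]$ with $u_j\in\{\sigma_j,e\}$; $j$ is a skip if $u_j=e$. $u_{(j)}=u_1\cdots u_j$, $u_{(0)}=e$. $\mathcal S_n$ is the set of subwords with exactly $2n-2$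 skips and product $e$. $\textsc{inv}(\mathsf u)=[t_1,\dots,t_{n(n-1)}]$, $t_j=u_{(j-1)}\sigma_ju_{(j-1)}^{-1}$, and $\mathsf r^{\mathsf u}$ is the subsequence of the $t_j$ at skips $j$, in increasing order. *)

theory Defs
  imports Main
begin

text \<open>Affine permutations of Z, with window size n; represented as functions int => int.
  Composition (v w)(k) = v (w k) is function composition.\<close>

definition affine_perm :: "nat \<Rightarrow> (int \<Rightarrow> int) \<Rightarrow> bool" where
  "affine_perm n w \<longleftrightarrow> bij w \<and> (\<forall>i. w (i + int n) = w i + int n) \<and>
     (\<Sum>i=1..int n. w i) = int n * (int n + 1) div 2"

text \<open>The affine reflection ((i,j)): swaps i+kn and j+kn for all k (meaningful for i, j
  incongruent mod n).\<close>
definition arefl :: "nat \<Rightarrow> int \<Rightarrow> int \<Rightarrow> int \<Rightarrow> int" where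
  "arefl n i j = (\<lambda>k. if k mod int n = i mod int n then k + (j - i)
                      else if k mod int n = j mod int n then k + (i - j) else k)"

definition is_reflection :: "nat \<Rightarrow> (int \<Rightarrow> int) \<Rightarrow> bool" where
  "is_reflection n r \<longleftrightarrow> (\<exists>i j. i mod int n \<noteq> j mod int n \<and> r = arefl n i j)"

definition sgen :: "nat \<Rightarrow> int \<Rightarrow> int \<Rightarrow> int" where
  "sgen n i = arefl n i (i + 1)"

definition lambda_n :: "nat \<Rightarrow> int \<Rightarrow> int" where
  "lambda_n n k = (if k mod int n \<noteq> 0 then k + int n else k - int n * (int n - 1))"

definition prodw :: "(int \<Rightarrow> int) list \<Rightarrow> int \<Rightarrow> int" where
  "prodw rs = foldr (\<circ>) rs id"

definition factset :: "nat \<Rightarrow> (int \<Rightarrow> int) \<Rightarrow> (int \<Rightarrow> int) list set" where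
  "factset n w = {rs. length rs = 2 * n - 2 \<and> (\<forall>r\<in>set rs. is_reflection n r) \<and> prodw rs = w}"

text \<open>Tree-like factorization of lambda_n; entries indexed 1..2n-2, r_k = rs!(k-1).\<close>
definition tree_like :: "nat \<Rightarrow> (int \<Rightarrow> int) list \<Rightarrow> bool" where
  "tree_like n rs \<longleftrightarrow> rs \<in> factset n (lambda_n n) \<and>
     (\<exists>a b :: nat \<Rightarrow> int.
        (\<forall>k\<in>{1..2*n-2}. a (k-1) < b k \<and> a (k-1) mod int n \<noteq> b k mod int n
                          \<and> rs ! (k-1) = arefl n (a (k-1)) (b k)) \<and>
        (\<forall>k\<in>{1..2*n-3}. a k mod int n = b k mod int n))"

definition sigma :: "nat \<Rightarrow> nat \<Rightarrow> int \<Rightarrow> int" where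
  "sigma n j = sgen n (int ((j - 1) mod n))"

text \<open>Subwords as lists u of length n(n-1), u_j = u!(j-1).\<close>
definition skips :: "(int \<Rightarrow> int) list \<Rightarrow> nat set" where
  "skips u = {j. 1 \<le> j \<and> j \<le> length u \<and> u ! (j-1) = id}"

definition Sn :: "nat \<Rightarrow> (int \<Rightarrow> int) list set" where
  "Sn n = {u. length u = n * (n - 1) \<and>
              (\<forall>j\<in>{1..n*(n-1)}. u ! (j-1) = sigma n j \<or> u ! (j-1) = id) \<and>
              card (skips u) = 2 * n - 2 \<and> prodw u = id}"

definition upref :: "(int \<Rightarrow> int) list \<Rightarrow> nat \<Rightarrow> int \<Rightarrow> int" where
  "upref u j = prodw (take j u)"

definition tinv :: "nat \<Rightarrow> (int \<Rightarrow> int) list \<Rightarrow> nat \<Rightarrow> int \<Rightarrow> int" where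
  "tinv n u j = upref u (j-1) \<circ> sigma n j \<circ> inv (upref u (j-1))"

definition r_of :: "nat \<Rightarrow> (int \<Rightarrow> int) list \<Rightarrow> (int \<Rightarrow> int) list" where
  "r_of n u = map (tinv n u) (filter (\<lambda>j. u ! (j-1) = id) [1..<length u + 1])"

end

theory Submission
  imports Defs
begin

(* Write P_k = u_(k) and use 0-based positions, so that the letter at k is ((k, k+1)) and the
   inversion at a skip k is ((P_k k, P_k (k+1))). Between two consecutive skips P_k k does not
   change, and a skip at k turns it into P_k (k+1); hence the right end of each inversion is the
   left end of the next one, which is the tree-like chaining (even with equality of the ends).

   It remains to see that P_k k < P_k (k+1) at every skip. Since P_(k+n-1) (k+n) = P_(k+1) k + n,
   along a lane l, l + (n-1), ..., l + (n-1)^2 the value P_k (k+1) grows by n per step, minus the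
   gap P_k (k+1) - P_k k at each skip. As the product of u is e, the gaps of a lane add up to n.
   No gap is divisible by n, so each of the n-1 lanes contains at least two skips, and as there
   are 2n-2 skips, each contains exactly two, with gaps d and n - d.
   Finally, base k - P_k k, where base k is the value of P_k (k+1) for the word without skips,
   stays between 1 and n+1 for all k, and this forces 0 < d < n. *)

lemma prodw_Nil [simp]: "prodw [] = id"
  by (simp add: prodw_def)

lemma prodw_Cons [simp]: "prodw (f # fs) = f \<circ> prodw fs"
  by (simp add: prodw_def)

lemma prodw_append [simp]: "prodw (fs @ gs) = prodw fs \<circ> prodw gs"
  by (induction fs) (simp_all add: comp_assoc)

lemma upref_0 [simp]: "upref u 0 = id"
  by (simp add: upref_def)

lemma upref_Suc: "k < length u \<Longrightarrow> upref u (Suc k) = upref u k \<circ> u ! k"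
  by (simp add: upref_def take_Suc_conv_app_nth)

lemma mod_ne_if_diff_less:
  fixes a b :: int
  assumes "0 < a - b" "a - b < int n"
  shows "a mod int n \<noteq> b mod int n"
  using assms zdvd_not_zless[of "a - b" "int n"] by (simp add: mod_eq_dvd_iff)

lemma succ_mod_ne: "2 \<le> n \<Longrightarrow> (x + 1) mod int n \<noteq> x mod int n"
  by (rule mod_ne_if_diff_less) simp_all

lemma mod_eq_add_multE:
  fixes x y :: int
  assumes "x mod int n = y mod int n"
  obtains t where "x = y + t * int n"
  using assms mod_eq_dvd_iff[of x "int n" y] by (auto simp: dvd_def algebra_simps)

lemma filter_upt_between:
  assumes "Suc i < length (filter P [a..<b])"
    and "filter P [a..<b] ! i < m" "m < filter P [a..<b] ! Suc i"
  shows "\<not> P m"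
proof
  define xs where "xs = filter P [a..<b]"
  have sorted: "sorted xs"
    by (simp add: xs_def sorted_wrt_filter)
  assume "P m"
  have "xs ! i \<in> set xs" "xs ! Suc i \<in> set xs"
    using assms(1) unfolding xs_def by (meson Suc_lessD nth_mem)+
  then have "m \<in> set xs"
    using assms(2,3) \<open>P m\<close> by (auto simp: xs_def)
  then obtain p where p: "p < length xs" "xs ! p = m"
    by (metis in_set_conv_nth)
  show False
  proof (cases "p \<le> i")
    case True
    then show False
      using sorted_nth_mono[OF sorted True] assms(1,2) p by (simp add: xs_def)
  next
    case False
    then show False
      using sorted_nth_mono[OF sorted, of "Suc i" p] assms(3) p by (simp add: xs_def)
  qed
qed

lemma tree_likeI:
  assumes "rs \<in> factset n (lambda_n n)"
    and "\<And>i. i < length rs \<Longrightarrow>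
      x i < y i \<and> x i mod int n \<noteq> y i mod int n \<and> rs ! i = arefl n (x i) (y i)"
    and "\<And>i. Suc i < length rs \<Longrightarrow> x (Suc i) = y i"
  shows "tree_like n rs"
proof -
  have len: "length rs = 2 * n - 2"
    using assms(1) by (simp add: factset_def)
  have "x (k - 1) < y (k - 1) \<and> x (k - 1) mod int n \<noteq> y (k - 1) mod int n
      \<and> rs ! (k - 1) = arefl n (x (k - 1)) (y (k - 1))" if "k \<in> {1..2 * n - 2}" for k
    using assms(2)[of "k - 1"] that len by (cases k) auto
  moreover have "x k mod int n = y (k - 1) mod int n" if "k \<in> {1..2 * n - 3}" for k
    using assms(3)[of "k - 1"] that len by (cases k) auto
  ultimately show ?thesis
    unfolding tree_like_def
    by (intro conjI exI[of _ x] exI[of _ "\<lambda>k. y (k - 1)"] ballI) (simp_all add: assms(1))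
qed

section \<open>Periodic bijections of the integers\<close>

definition periodic_bij :: "nat \<Rightarrow> (int \<Rightarrow> int) \<Rightarrow> bool" where
  "periodic_bij n p \<longleftrightarrow> bij p \<and> (\<forall>x. p (x + int n) = p x + int n)"

lemma periodic_bij_id [simp]: "periodic_bij n id"
  by (simp add: periodic_bij_def)

lemma periodic_bij_comp: "periodic_bij n p \<Longrightarrow> periodic_bij n q \<Longrightarrow> periodic_bij n (p \<circ> q)"
  by (simp add: periodic_bij_def bij_comp)

lemma periodic_bij_prodw: "(\<And>f. f \<in> set fs \<Longrightarrow> periodic_bij n f) \<Longrightarrow> periodic_bij n (prodw fs)"
  by (induction fs) (simp_all add: periodic_bij_comp)

lemma periodic_add_mult:
  assumes "\<And>x. p (x + int n) = p x + int n"
  shows "p (x + t * int n) = p x + t * int n"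
proof (induction t rule: int_induct[where k = 0])
  case (step1 t)
  have "p (x + (t + 1) * int n) = p ((x + t * int n) + int n)"
    by (simp add: algebra_simps)
  also have "\<dots> = p (x + t * int n) + int n"
    by (rule assms)
  also have "\<dots> = p x + (t + 1) * int n"
    using step1 by (simp add: algebra_simps)
  finally show ?case .
next
  case (step2 t)
  have "p (x + (t - 1) * int n) + int n = p ((x + (t - 1) * int n) + int n)"
    by (rule assms[symmetric])
  also have "\<dots> = p x + t * int n"
    using step2 by (simp add: algebra_simps)
  finally show ?case by (simp add: algebra_simps)
qed simp

lemma periodic_mod_eq:
  assumes "\<And>x. p (x + int n) = p x + int n" and "x mod int n = y mod int n"
  shows "p x mod int n = p y mod int n"
proof -
  obtain t where "x = y + t * int n"
    using assms(2) by (rule mod_eq_add_multE)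
  then show ?thesis using periodic_add_mult[of p, OF assms(1)] by simp
qed

lemma periodic_bij_inv: "periodic_bij n p \<Longrightarrow> periodic_bij n (inv p)"
  unfolding periodic_bij_def
  by (metis bij_imp_bij_inv bij_inv_eq_iff)

lemma periodic_bij_mod_eq_iff:
  assumes "periodic_bij n p"
  shows "p x mod int n = p y mod int n \<longleftrightarrow> x mod int n = y mod int n"
proof
  have per: "\<And>z. p (z + int n) = p z + int n"
    using assms by (simp add: periodic_bij_def)
  assume "x mod int n = y mod int n"
  then show "p x mod int n = p y mod int n"
    by (rule periodic_mod_eq[of p, OF per])
next
  have per: "\<And>z. inv p (z + int n) = inv p z + int n" and inj: "inj p"
    using assms periodic_bij_inv[OF assms] by (simp_all add: periodic_bij_def bij_is_inj)
  assume "p x mod int n = p y mod int n"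
  then have "inv p (p x) mod int n = inv p (p y) mod int n"
    by (rule periodic_mod_eq[of "inv p", OF per])
  then show "x mod int n = y mod int n"
    using inj by simp
qed

lemma periodic_eqI:
  assumes p: "\<And>x. p (x + int n) = p x + int n" and q: "\<And>x. q (x + int n) = q x + int n"
    and "n > 0" and agree: "\<And>x. a \<le> x \<Longrightarrow> x < a + int n \<Longrightarrow> p x = q x"
  shows "p = q"
proof
  fix x
  define r where "r = a + (x - a) mod int n"
  define t where "t = (x - a) div int n"
  have x: "x = r + t * int n"
    unfolding r_def t_def by (simp add: algebra_simps)
  have "p r = q r"
    using agree \<open>n > 0\<close> by (simp add: r_def)
  then show "p x = q x"
    unfolding x periodic_add_mult[of p, OF p] periodic_add_mult[of q, OF q] by simp
qed

lemma periodic_lambda_n: "lambda_n n (x + int n) = lambda_n n x + int n"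
  by (simp add: lambda_n_def)

section \<open>Affine reflections\<close>

lemma arefl_shift: "arefl n (i + t * int n) (j + t * int n) = arefl n i j"
  by (simp add: arefl_def fun_eq_iff)

lemma sigma_Suc: "sigma n (Suc k) = arefl n (int k) (int k + 1)"
proof -
  have k: "int k = int (k mod n) + int (k div n) * int n"
    by (metis mod_div_mult_eq of_nat_add of_nat_mult)
  have "arefl n (int k) (int k + 1) = arefl n (int (k mod n)) (int (k mod n) + 1)"
    using arefl_shift[of n "int (k mod n)" "int (k div n)" "int (k mod n) + 1"]
    by (simp add: k algebra_simps)
  then show ?thesis
    by (simp add: sigma_def sgen_def)
qed

lemma sigma_Suc_ne_id:
  assumes "2 \<le> n"
  shows "sigma n (Suc k) \<noteq> id"
proof
  assume "sigma n (Suc k) = id"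
  then have "sigma n (Suc k) (int k) = int k"
    by simp
  then show False
    using succ_mod_ne[OF assms, of "int k"] by (simp add: sigma_Suc arefl_def)
qed

lemma arefl_arefl:
  assumes "i mod int n \<noteq> j mod int n"
  shows "arefl n i j (arefl n i j x) = x"
proof -
  have "(x + (j - i)) mod int n = j mod int n" if "x mod int n = i mod int n"
    using mod_add_cong[OF that, of "j - i" "j - i"] by simp
  moreover have "(x + (i - j)) mod int n = i mod int n" if "x mod int n = j mod int n"
    using mod_add_cong[OF that, of "i - j" "i - j"] by simp
  ultimately show ?thesis
    using assms by (auto simp: arefl_def)
qed

lemma periodic_bij_arefl:
  assumes "i mod int n \<noteq> j mod int n"
  shows "periodic_bij n (arefl n i j)"
proof -
  have "arefl n i j \<circ> arefl n i j = id"
    using arefl_arefl[OF assms] by (simp add: fun_eq_iff)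
  then have "bij (arefl n i j)"
    using o_bij by blast
  then show ?thesis
    by (simp add: periodic_bij_def arefl_def)
qed

lemma periodic_bij_arefl_comm:
  assumes p: "periodic_bij n p" and ij: "i mod int n \<noteq> j mod int n"
  shows "p (arefl n i j x) = arefl n (p i) (p j) (p x)"
proof -
  have per: "\<And>z. p (z + int n) = p z + int n"
    using p by (simp add: periodic_bij_def)
  note mod_iff = periodic_bij_mod_eq_iff[OF p]
  consider (i) "x mod int n = i mod int n" | (j) "x mod int n = j mod int n"
    | (other) "x mod int n \<noteq> i mod int n" "x mod int n \<noteq> j mod int n"
    by blast
  then show ?thesis
  proof cases
    case i
    then obtain t where x: "x = i + t * int n"
      by (rule mod_eq_add_multE)
    have "p (arefl n i j x) = p (j + t * int n)"
      using i by (simp add: arefl_def x add.commute)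
    then show ?thesis
      using i by (simp add: arefl_def mod_iff x periodic_add_mult[of p, OF per])
  next
    case j
    then obtain t where x: "x = j + t * int n"
      by (rule mod_eq_add_multE)
    have "p (arefl n i j x) = p (i + t * int n)"
      using j ij by (simp add: arefl_def x add.commute)
    then show ?thesis
      using j ij by (simp add: arefl_def mod_iff x periodic_add_mult[of p, OF per])
  next
    case other
    then show ?thesis
      by (simp add: arefl_def mod_iff)
  qed
qed

lemma periodic_bij_conj_arefl:
  assumes "periodic_bij n p" and "i mod int n \<noteq> j mod int n"
  shows "p \<circ> arefl n i j \<circ> inv p = arefl n (p i) (p j)"
proof
  fix y
  have "p (inv p y) = y"
    using assms(1) by (simp add: periodic_bij_def bij_is_surj surj_f_inv_f)
  then show "(p \<circ> arefl n i j \<circ> inv p) y = arefl n (p i) (p j) y"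
    using periodic_bij_arefl_comm[OF assms, of "inv p y"] by simp
qed

section \<open>Inversions of a subword\<close>

locale subword =
  fixes n :: nat and u :: "(int \<Rightarrow> int) list"
  assumes two_le_n: "2 \<le> n"
    and length_u: "length u = n * (n - 1)"
    and letter_cases: "\<And>k. k < n * (n - 1) \<Longrightarrow> u ! k = sigma n (Suc k) \<or> u ! k = id"
begin

(* u ! k is the letter u_(k+1) of the paper: positions are 0-based, so the letter at k
   is ((k, k + 1)) by sigma_Suc. *)
definition skip :: "nat \<Rightarrow> bool" where
  "skip k \<longleftrightarrow> u ! k = id"

definition left_end :: "nat \<Rightarrow> int" where
  "left_end k = upref u k (int k)"

definition right_end :: "nat \<Rightarrow> int" where
  "right_end k = upref u k (int k + 1)"

lemma periodic_bij_sigma: "periodic_bij n (sigma n (Suc k))"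
  unfolding sigma_Suc by (rule periodic_bij_arefl) (rule not_sym[OF succ_mod_ne[OF two_le_n]])

lemma periodic_bij_upref: "periodic_bij n (upref u k)"
  unfolding upref_def
proof (rule periodic_bij_prodw)
  fix f assume "f \<in> set (take k u)"
  then obtain j where "j < n * (n - 1)" "f = u ! j"
    using length_u by (metis in_set_conv_nth in_set_takeD)
  then show "periodic_bij n f"
    using letter_cases periodic_bij_sigma by fastforce
qed

lemma upref_Suc_eq:
  assumes "k < n * (n - 1)"
  shows "upref u (Suc k) = (if skip k then upref u k else upref u k \<circ> arefl n (int k) (int k + 1))"
  using letter_cases[OF assms] upref_Suc[of k u] assms
  by (auto simp: skip_def length_u sigma_Suc)

lemma upref_fixed:
  assumes "k \<le> k'" "k' \<le> n * (n - 1)"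
    and "\<And>j. k \<le> j \<Longrightarrow> j < k' \<Longrightarrow> x mod int n \<noteq> int j mod int n \<and> x mod int n \<noteq> (int j + 1) mod int n"
  shows "upref u k' x = upref u k x"
  using assms
proof (induction k' rule: dec_induct)
  case (step j)
  then show ?case
    by (simp add: upref_Suc_eq arefl_def)
qed simp

lemma left_end_0: "left_end 0 = 0"
  by (simp add: left_end_def)

lemma left_end_Suc:
  assumes "k < n * (n - 1)"
  shows "left_end (Suc k) = (if skip k then right_end k else left_end k)"
  using upref_Suc_eq[OF assms] succ_mod_ne[OF two_le_n, of "int k"]
  by (simp add: left_end_def right_end_def arefl_def add.commute)

lemma left_end_after_skip:
  assumes "skip i"
  shows "i < j \<Longrightarrow> j \<le> n * (n - 1) \<Longrightarrow> (\<And>m. i < m \<Longrightarrow> m < j \<Longrightarrow> \<not> skip m) \<Longrightarrow>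
    left_end j = right_end i"
proof (induction j)
  case (Suc j)
  then show ?case
    using assms by (cases "i = j") (simp_all add: left_end_Suc)
qed simp

lemma left_end_mod_ne_right_end: "left_end k mod int n \<noteq> right_end k mod int n"
  using not_sym[OF succ_mod_ne[OF two_le_n, of "int k"]] periodic_bij_mod_eq_iff[OF periodic_bij_upref]
  by (simp add: right_end_def left_end_def)

lemma is_reflection_inversion: "is_reflection n (arefl n (left_end k) (right_end k))"
  unfolding is_reflection_def using left_end_mod_ne_right_end by blast

lemma tinv_Suc:
  assumes "k < n * (n - 1)"
  shows "tinv n u (Suc k) = arefl n (left_end k) (right_end k)"
  using periodic_bij_conj_arefl[OF periodic_bij_upref, of "int k" "int k + 1"]
    succ_mod_ne[OF two_le_n, of "int k"]
  by (simp add: tinv_def sigma_Suc left_end_def right_end_def)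

(* Reinsert the skipped letters one at a time, using t_(k+1) u_(k) = u_(k) sigma_(k+1). *)
lemma prodw_sigma_prefix:
  assumes "k \<le> n * (n - 1)"
  shows "prodw (map (sigma n) [1..<Suc k]) =
    prodw (map (tinv n u) (filter (\<lambda>j. u ! (j - 1) = id) [1..<Suc k])) \<circ> upref u k"
  using assms
proof (induction k)
  case (Suc k)
  define R where "R = prodw (map (tinv n u) (filter (\<lambda>j. u ! (j - 1) = id) [1..<Suc k]))"
  have k: "k < n * (n - 1)"
    using Suc.prems by simp
  have upt_split: "[1..<Suc (Suc k)] = [1..<Suc k] @ [Suc k]"
    by simp
  have prefix_Suc: "prodw (map (sigma n) [1..<Suc (Suc k)]) = R \<circ> upref u k \<circ> sigma n (Suc k)"
    unfolding upt_split map_append prodw_append Suc.IH[OF less_imp_le[OF k]] R_def by simp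
  have upref: "upref u (Suc k) = upref u k \<circ> u ! k"
    using k length_u by (simp add: upref_Suc)
  note unfold_prefix = upt_split filter_append map_append prodw_append R_def[symmetric]
  show ?case
  proof (cases "skip k")
    case True
    have "tinv n u (Suc k) (upref u k x) = upref u k (sigma n (Suc k) x)" for x
      using periodic_bij_upref[of k] by (simp add: tinv_def periodic_bij_def bij_is_inj)
    then show ?thesis
      unfolding prefix_Suc unfolding unfold_prefix
      using True upref by (simp add: skip_def comp_assoc del: upt_Suc)
  next
    case False
    then have "u ! k = sigma n (Suc k)"
      using letter_cases[OF k] by (simp add: skip_def)
    then show ?thesis
      unfolding prefix_Suc unfolding unfold_prefix
      using False upref by (simp add: skip_def comp_assoc del: upt_Suc)
  qed
qed simp

definition gap :: "nat \<Rightarrow> int" where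
  "gap k = right_end k - left_end k"

definition skip_gap :: "nat \<Rightarrow> int" where
  "skip_gap k = (if skip k then gap k else 0)"

(* the value of right_end k when no letter before k is skipped *)
definition base :: "nat \<Rightarrow> int" where
  "base k = int k + 1 + int (k div (n - 1))"

lemma gap_mod_ne_0: "gap k mod int n \<noteq> 0"
  using left_end_mod_ne_right_end[of k]
  by (simp add: gap_def mod_eq_dvd_iff dvd_eq_mod_eq_0[symmetric] dvd_diff_commute)

lemma base_Suc_ge: "base k + 1 \<le> base (Suc k)"
  using div_le_mono[of k "Suc k" "n - 1"] by (simp add: base_def)

lemma upref_Suc_self:
  assumes "k < n * (n - 1)"
  shows "upref u (Suc k) (int k) = right_end k - skip_gap k"
  using upref_Suc_eq[OF assms] succ_mod_ne[OF two_le_n, of "int k"]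
  by (simp add: left_end_def right_end_def arefl_def skip_gap_def gap_def)

lemma row_le_length: "n - 1 \<le> n * (n - 1)"
  using two_le_n by simp

lemma right_end_first_row:
  assumes "k < n - 1"
  shows "right_end k = int k + 1"
proof -
  have "upref u k (int k + 1) = upref u 0 (int k + 1)"
  proof (rule upref_fixed)
    show "k \<le> n * (n - 1)"
      using assms row_le_length by linarith
    fix j assume "0 \<le> j" "j < k"
    then show "(int k + 1) mod int n \<noteq> int j mod int n \<and> (int k + 1) mod int n \<noteq> (int j + 1) mod int n"
      using assms mod_ne_if_diff_less[of "int k + 1" "int j" n]
        mod_ne_if_diff_less[of "int k + 1" "int j + 1" n] by auto
  qed simp
  then show ?thesis
    by (simp add: right_end_def)
qed

lemma right_end_next_row:
  assumes "j + (n - 1) < n * (n - 1)"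
  shows "right_end (j + (n - 1)) = upref u (Suc j) (int j) + int n"
proof -
  define k where "k = j + (n - 1)"
  have "right_end k = upref u (Suc j) (int k + 1)"
    unfolding right_end_def
  proof (rule upref_fixed)
    show "Suc j \<le> k" "k \<le> n * (n - 1)"
      using assms two_le_n by (simp_all add: k_def)
    fix m assume "Suc j \<le> m" "m < k"
    then show "(int k + 1) mod int n \<noteq> int m mod int n \<and> (int k + 1) mod int n \<noteq> (int m + 1) mod int n"
      using mod_ne_if_diff_less[of "int k + 1" "int m" n]
        mod_ne_if_diff_less[of "int k + 1" "int m + 1" n] two_le_n by (auto simp: k_def)
  qed
  also have "int k + 1 = int j + int n"
    using two_le_n by (simp add: k_def of_nat_diff)
  also have "upref u (Suc j) (int j + int n) = upref u (Suc j) (int j) + int n"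
    using periodic_bij_upref by (simp add: periodic_bij_def)
  finally show ?thesis
    unfolding k_def .
qed

lemma upref_last_row:
  assumes "n * (n - 1) - (n - 1) \<le> k" "k < n * (n - 1)"
  shows "upref u (n * (n - 1)) (int k) = upref u (Suc k) (int k)"
proof (rule upref_fixed)
  fix j assume j: "Suc k \<le> j" "j < n * (n - 1)"
  have "int j + 1 - int k < int n"
    using assms j row_le_length by linarith
  then show "int k mod int n \<noteq> int j mod int n \<and> int k mod int n \<noteq> (int j + 1) mod int n"
    using j mod_ne_if_diff_less[of "int j" "int k" n]
      mod_ne_if_diff_less[of "int j + 1" "int k" n] by auto
qed (use assms in simp_all)

lemma lane_less:
  assumes "l < n - 1" "i < n"
  shows "l + i * (n - 1) < n * (n - 1)"
proof -
  have "l + i * (n - 1) < Suc i * (n - 1)"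
    using assms(1) by simp
  also have "\<dots> \<le> n * (n - 1)"
    using assms(2) by (intro mult_le_mono1) simp
  finally show ?thesis .
qed

lemma base_lane:
  assumes "l < n - 1"
  shows "base (l + j * (n - 1)) = int l + 1 + int j * int n"
proof -
  have "(l + j * (n - 1)) div (n - 1) = j"
    using assms by simp
  then show ?thesis
    unfolding base_def using two_le_n by (simp add: of_nat_diff, simp add: algebra_simps)
qed

lemma right_end_lane:
  assumes l: "l < n - 1"
  shows "j < n \<Longrightarrow>
    right_end (l + j * (n - 1)) = base (l + j * (n - 1)) - (\<Sum>i<j. skip_gap (l + i * (n - 1)))"
proof (induction j)
  case 0
  then show ?case
    using right_end_first_row[OF l] l by (simp add: base_def)
next
  case (Suc j)
  define k where "k = l + j * (n - 1)"
  have next_k: "l + Suc j * (n - 1) = k + (n - 1)"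
    by (simp add: k_def)
  have "k + (n - 1) < n * (n - 1)"
    using lane_less[OF l Suc.prems] unfolding next_k .
  then have "right_end (k + (n - 1)) = right_end k - skip_gap k + int n"
    using right_end_next_row upref_Suc_self by simp
  moreover have "right_end k = base k - (\<Sum>i<j. skip_gap (l + i * (n - 1)))"
    using Suc by (simp add: k_def)
  moreover have "base k = int l + 1 + int j * int n"
    unfolding k_def by (rule base_lane[OF l])
  moreover have "base (k + (n - 1)) = int l + 1 + int (Suc j) * int n"
    unfolding next_k[symmetric] by (rule base_lane[OF l])
  moreover have "(\<Sum>i<Suc j. skip_gap (l + i * (n - 1)))
      = (\<Sum>i<j. skip_gap (l + i * (n - 1))) + skip_gap k"
    by (simp add: k_def)
  ultimately show ?case
    unfolding next_k by (simp add: algebra_simps)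
qed

lemma upref_length_lane:
  assumes l: "l < n - 1"
  shows "upref u (n * (n - 1)) (int (l + (n - 1) * (n - 1))) =
    int (l + (n - 1) * (n - 1)) + int n - (\<Sum>i<n. skip_gap (l + i * (n - 1)))"
proof -
  define k where "k = l + (n - 1) * (n - 1)"
  have n: "n = Suc (n - 1)"
    using two_le_n by simp
  have "n * (n - 1) = (n - 1) * (n - 1) + (n - 1)"
    by (subst (1) n) simp
  then have "n * (n - 1) - (n - 1) \<le> k"
    unfolding k_def by arith
  moreover have "k < n * (n - 1)"
    unfolding k_def using lane_less[OF l, of "n - 1"] two_le_n by simp
  ultimately have "upref u (n * (n - 1)) (int k) = right_end k - skip_gap k"
    using upref_last_row upref_Suc_self by simp
  moreover have "right_end k = base k - (\<Sum>i<n - 1. skip_gap (l + i * (n - 1)))"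
    unfolding k_def using right_end_lane[OF l, of "n - 1"] two_le_n by simp
  moreover have "base k = int k + int n"
    unfolding k_def base_lane[OF l] using two_le_n by (simp add: of_nat_diff, simp add: algebra_simps)
  moreover have "(\<Sum>i<n. skip_gap (l + i * (n - 1)))
      = (\<Sum>i<n - 1. skip_gap (l + i * (n - 1))) + skip_gap k"
    by (subst (1) n, subst sum.lessThan_Suc) (simp add: k_def)
  ultimately show ?thesis
    by (simp add: k_def)
qed

lemma upref_length_no_skip:
  assumes no_skip: "\<And>k. k < n * (n - 1) \<Longrightarrow> \<not> skip k"
  shows "upref u (n * (n - 1)) = lambda_n n"
proof (rule periodic_eqI)
  have nn: "n * (n - 1) = (n - 1) * (n - 1) + (n - 1)"
    using two_le_n by (cases n) simp_all
  fix x assume x: "int ((n - 1) * (n - 1)) \<le> x" "x < int ((n - 1) * (n - 1)) + int n"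
  obtain l where l: "x = int ((n - 1) * (n - 1)) + int l"
    using x(1) zle_iff_zadd by blast
  then have "l < n"
    using x(2) by linarith
  have xl: "x = int (l + (n - 1) * (n - 1))"
    using l by simp
  show "upref u (n * (n - 1)) x = lambda_n n x"
  proof (cases "l < n - 1")
    case True
    have "skip_gap (l + i * (n - 1)) = 0" if "i < n" for i
      using no_skip[OF lane_less[OF True that]] by (simp add: skip_gap_def)
    then have "upref u (n * (n - 1)) x = x + int n"
      using upref_length_lane[OF True] by (simp add: xl)
    moreover have "int (n * (n - 1)) mod int n \<noteq> x mod int n"
      by (rule mod_ne_if_diff_less) (use True nn in \<open>simp_all add: xl\<close>)
    ultimately show ?thesis
      by (simp add: lambda_n_def)
  next
    case False
    then have x_eq: "x = int (n * (n - 1))"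
      using xl \<open>l < n\<close> nn by simp
    have left_end: "left_end k = 0" if "k \<le> n * (n - 1)" for k
      using that by (induction k) (simp_all add: left_end_0 left_end_Suc no_skip)
    show ?thesis
      using left_end[of "n * (n - 1)"] two_le_n by (simp add: x_eq left_end_def lambda_n_def of_nat_diff)
  qed
qed (use periodic_bij_upref two_le_n in \<open>simp_all add: periodic_bij_def periodic_lambda_n\<close>)

(* The bounds 1 \<le> slack k \<le> n + 1 are what keep both gaps of a lane between 0 and n. *)
definition slack :: "nat \<Rightarrow> int" where
  "slack k = base k - left_end k"

lemma slack_0: "slack 0 = 1"
  by (simp add: slack_def base_def left_end_0)

lemma slack_Suc_no_skip: "k < n * (n - 1) \<Longrightarrow> \<not> skip k \<Longrightarrow> slack k + 1 \<le> slack (Suc k)"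
  using base_Suc_ge[of k] by (simp add: slack_def left_end_Suc)

lemma slack_Suc_skip: "k < n * (n - 1) \<Longrightarrow> skip k \<Longrightarrow> slack (Suc k) = base (Suc k) - right_end k"
  by (simp add: slack_def left_end_Suc)

end

lemma prodw_sigma_word:
  assumes n: "2 \<le> n"
  shows "prodw (map (sigma n) [1..<Suc (n * (n - 1))]) = lambda_n n"
proof -
  define w where "w = map (sigma n) [1..<Suc (n * (n - 1))]"
  interpret w: subword n w
    using n by unfold_locales (simp_all add: w_def nth_append del: upt_Suc)
  have "\<not> w.skip k" if "k < n * (n - 1)" for k
  proof -
    have "w ! k = sigma n (Suc k)"
      using that by (simp add: w_def del: upt_Suc)
    then show ?thesis
      using sigma_Suc_ne_id[OF n] by (simp add: w.skip_def)
  qed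
  then have "upref w (n * (n - 1)) = lambda_n n"
    by (rule w.upref_length_no_skip)
  moreover have "upref w (n * (n - 1)) = prodw w"
    unfolding upref_def using w.length_u by simp
  ultimately show ?thesis
    unfolding w_def by simp
qed

section \<open>Subwords with trivial product\<close>

locale identity_subword = subword +
  assumes prodw_u: "prodw u = id"
    and card_skips: "card (skips u) = 2 * n - 2"
begin

lemma upref_length: "upref u (n * (n - 1)) = id"
  unfolding upref_def length_u[symmetric] using prodw_u by simp

lemma card_skip_positions: "card {k. k < n * (n - 1) \<and> skip k} = 2 * (n - 1)"
proof -
  have "skips u = Suc ` {k. k < n * (n - 1) \<and> skip k}"
  proof (intro equalityI subsetI)
    fix j assume "j \<in> skips u"
    then have "j = Suc (j - 1)" "j - 1 \<in> {k. k < n * (n - 1) \<and> skip k}"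
      by (auto simp: skips_def skip_def length_u)
    then show "j \<in> Suc ` {k. k < n * (n - 1) \<and> skip k}"
      by blast
  qed (auto simp: skips_def skip_def length_u)
  then show ?thesis
    using card_skips by (simp add: card_image)
qed

lemma lane_skip_gap_sum: "l < n - 1 \<Longrightarrow> (\<Sum>i<n. skip_gap (l + i * (n - 1))) = int n"
  using upref_length_lane upref_length by simp

definition lane_skips :: "nat \<Rightarrow> nat set" where
  "lane_skips l = {i. i < n \<and> skip (l + i * (n - 1))}"

lemma finite_lane_skips: "finite (lane_skips l)"
  by (simp add: lane_skips_def)

lemma sum_skip_gap_lane:
  assumes "j \<le> n"
  shows "(\<Sum>i<j. skip_gap (l + i * (n - 1)))
    = (\<Sum>i\<in>lane_skips l \<inter> {..<j}. gap (l + i * (n - 1)))"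
proof -
  have "lane_skips l \<inter> {..<j} = {i \<in> {..<j}. skip (l + i * (n - 1))}"
    using assms by (auto simp: lane_skips_def)
  then show ?thesis
    unfolding skip_gap_def by (simp only: sum.inter_filter[symmetric] finite_lessThan)
qed

lemma lane_gap_sum: "l < n - 1 \<Longrightarrow> (\<Sum>i\<in>lane_skips l. gap (l + i * (n - 1))) = int n"
  using lane_skip_gap_sum sum_skip_gap_lane[of n l] by (simp add: lane_skips_def Int_absorb2 subset_eq)

lemma two_le_card_lane_skips:
  assumes l: "l < n - 1"
  shows "2 \<le> card (lane_skips l)"
proof (rule ccontr)
  assume "\<not> 2 \<le> card (lane_skips l)"
  then consider "lane_skips l = {}" | i where "lane_skips l = {i}"
    using finite_lane_skips[of l] by (metis One_nat_def card_1_singletonE card_0_eq less_2_cases not_le)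
  then show False
  proof cases
    case 1
    then show False
      using lane_gap_sum[OF l] two_le_n by simp
  next
    case 2
    then have "gap (l + i * (n - 1)) = int n"
      using lane_gap_sum[OF l] by simp
    then show False
      using gap_mod_ne_0 by (metis mod_self)
  qed
qed

lemma card_skip_positions_eq_sum_lanes:
  "card {k. k < n * (n - 1) \<and> skip k} = (\<Sum>l<n - 1. card (lane_skips l))"
proof -
  have "bij_betw (\<lambda>(l, i). l + i * (n - 1)) (SIGMA l:{..<n - 1}. lane_skips l)
      {k. k < n * (n - 1) \<and> skip k}"
  proof (rule bij_betw_byWitness[where f' = "\<lambda>k. (k mod (n - 1), k div (n - 1))"])
    show "(\<lambda>(l, i). l + i * (n - 1)) ` (SIGMA l:{..<n - 1}. lane_skips l)
        \<subseteq> {k. k < n * (n - 1) \<and> skip k}"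
      using lane_less by (auto simp: lane_skips_def)
    show "(\<lambda>k. (k mod (n - 1), k div (n - 1))) ` {k. k < n * (n - 1) \<and> skip k}
        \<subseteq> (SIGMA l:{..<n - 1}. lane_skips l)"
      using two_le_n by (auto simp: lane_skips_def less_mult_imp_div_less mod_div_mult_eq)
  qed (auto simp: lane_skips_def mod_div_mult_eq)
  then show ?thesis
    using finite_lane_skips by (simp add: bij_betw_same_card[symmetric])
qed

lemma card_lane_skips:
  assumes "l < n - 1"
  shows "card (lane_skips l) = 2"
proof -
  have "(\<Sum>l<n - 1. 2) = (\<Sum>l<n - 1. card (lane_skips l))"
    using card_skip_positions card_skip_positions_eq_sum_lanes by simp
  then have "2 = card (lane_skips l)"
    by (rule sum_mono_inv) (use two_le_card_lane_skips assms in auto)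
  then show ?thesis
    by simp
qed

lemma right_end_lane_skips:
  assumes "l < n - 1" "j < n"
  shows "right_end (l + j * (n - 1))
    = base (l + j * (n - 1)) - (\<Sum>i\<in>lane_skips l \<inter> {..<j}. gap (l + i * (n - 1)))"
  using right_end_lane[OF assms] sum_skip_gap_lane[of j l] assms(2) by simp

lemma skip_cases [consumes 2, case_names first second]:
  assumes k: "k < n * (n - 1)" and "skip k"
  obtains (first) g where "k < g" "g < n * (n - 1)" "skip g" "right_end k = base k"
      "right_end g = base g - gap k" "gap k + gap g = int n"
    | (second) f where "f < k" "skip f" "right_end f = base f"
      "right_end k = base k - gap f" "gap f + gap k = int n"
proof -
  define l where "l = k mod (n - 1)"
  have l: "l < n - 1"
    using two_le_n by (simp add: l_def)
  have "k div (n - 1) \<in> lane_skips l"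
    using k \<open>skip k\<close> two_le_n
    by (simp add: lane_skips_def l_def less_mult_imp_div_less mod_div_mult_eq)
  obtain i1 i2 where lane: "lane_skips l = {i1, i2}" "i1 < i2"
    using card_lane_skips[OF l] by (metis card_2_iff linorder_neqE insert_commute)
  define f g where "f = l + i1 * (n - 1)" and "g = l + i2 * (n - 1)"
  have "i1 < n" "i2 < n" "skip f" "skip g"
    using lane by (auto simp: lane_skips_def f_def g_def)
  have "lane_skips l \<inter> {..<i1} = {}" "lane_skips l \<inter> {..<i2} = {i1}"
    using lane by auto
  then have ends: "right_end f = base f" "right_end g = base g - gap f"
    using right_end_lane_skips[OF l \<open>i1 < n\<close>] right_end_lane_skips[OF l \<open>i2 < n\<close>]
    by (simp_all add: f_def g_def)
  have sum: "gap f + gap g = int n"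
    using lane_gap_sum[OF l] lane by (simp add: f_def g_def)
  have order: "f < g" "g < n * (n - 1)"
    using lane lane_less[OF l \<open>i2 < n\<close>] two_le_n by (simp_all add: f_def g_def)
  have "k = f \<or> k = g"
    using \<open>k div (n - 1) \<in> lane_skips l\<close> lane
    by (auto simp: f_def g_def l_def mod_div_mult_eq)
  then show ?thesis
  proof
    assume "k = f"
    then show ?thesis
      using ends sum order \<open>skip g\<close> by (intro first[of g]) simp_all
  next
    assume "k = g"
    then show ?thesis
      using ends sum order \<open>skip f\<close> by (intro second[of f]) simp_all
  qed
qed

lemma slack_length: "slack (n * (n - 1)) = int n + 1"
  using two_le_n upref_length by (simp add: slack_def base_def left_end_def)

lemma one_le_slack: "k \<le> n * (n - 1) \<Longrightarrow> 1 \<le> slack k"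
proof (induction k rule: less_induct)
  case (less k)
  show ?case
  proof (cases k)
    case 0
    then show ?thesis
      by (simp add: slack_0)
  next
    case (Suc k')
    then have k': "k' < n * (n - 1)"
      using less.prems by simp
    show ?thesis
    proof (cases "skip k'")
      case False
      then show ?thesis
        using less.IH[of k'] slack_Suc_no_skip[OF k'] Suc k' by simp
    next
      case True
      with k' show ?thesis
      proof (cases rule: skip_cases)
        case (first g)
        then show ?thesis
          using slack_Suc_skip[OF k' True] base_Suc_ge[of k'] Suc by simp
      next
        case (second f)
        then have "slack f = gap f"
          by (simp add: slack_def gap_def)
        then show ?thesis
          using second less.IH[of f] slack_Suc_skip[OF k' True] base_Suc_ge[of k'] Suc k' by simp
      qed
    qed
  qed
qed

lemma slack_le: "k \<le> n * (n - 1) \<Longrightarrow> slack k \<le> int n + 1"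
proof (induction "n * (n - 1) - k" arbitrary: k rule: less_induct)
  case (less k)
  show ?case
  proof (cases "k = n * (n - 1)")
    case True
    then show ?thesis
      using slack_length by simp
  next
    case False
    then have k: "k < n * (n - 1)"
      using less.prems by simp
    show ?thesis
    proof (cases "skip k")
      case False
      have "slack (Suc k) \<le> int n + 1"
        by (rule less.hyps) (use k in arith)+
      then show ?thesis
        using slack_Suc_no_skip[OF k False] by simp
    next
      case True
      with k show ?thesis
      proof (cases rule: skip_cases)
        case (first g)
        then have "slack (Suc g) = base (Suc g) - base g + slack k"
          using slack_Suc_skip[of g] by (simp add: slack_def gap_def)
        moreover have "slack (Suc g) \<le> int n + 1"
          by (rule less.hyps) (use first in arith)+
        ultimately show ?thesis
          using base_Suc_ge[of g] by simp
      next
        case (second f)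
        then show ?thesis
          by (simp add: slack_def gap_def)
      qed
    qed
  qed
qed

lemma left_end_less_right_end:
  assumes k: "k < n * (n - 1)" and "skip k"
  shows "left_end k < right_end k"
  using assms
proof (cases rule: skip_cases)
  case (first g)
  then have "gap k = slack k"
    by (simp add: slack_def gap_def)
  then show ?thesis
    using one_le_slack[of k] k by (simp add: gap_def)
next
  case (second f)
  have "slack (Suc k) = base (Suc k) - base k + gap f"
    using slack_Suc_skip[OF assms] second by simp
  then have "gap f \<le> int n"
    using slack_le[of "Suc k"] base_Suc_ge[of k] k by simp
  moreover have "gap f \<noteq> int n"
    using gap_mod_ne_0[of f] by auto
  ultimately show ?thesis
    using second by (simp add: gap_def)
qed

definition skip_list :: "nat list" where
  "skip_list = filter skip [0..<n * (n - 1)]"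

lemma set_skip_list: "k \<in> set skip_list \<longleftrightarrow> k < n * (n - 1) \<and> skip k"
  by (simp add: skip_list_def)

lemma length_skip_list: "length skip_list = 2 * n - 2"
proof -
  have "{i. i < n * (n - 1) \<and> skip ([0..<n * (n - 1)] ! i)} = {k. k < n * (n - 1) \<and> skip k}"
    by auto
  then show ?thesis
    using card_skip_positions by (simp add: skip_list_def length_filter_conv_card)
qed

lemma r_of_eq: "r_of n u = map (\<lambda>k. arefl n (left_end k) (right_end k)) skip_list"
proof -
  have "[1..<length u + 1] = map Suc [0..<n * (n - 1)]"
    by (simp add: length_u map_Suc_upt del: upt_Suc)
  then have "r_of n u = map (\<lambda>k. tinv n u (Suc k)) skip_list"
    by (simp add: r_of_def skip_list_def filter_map comp_def skip_def[abs_def] del: upt_Suc)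
  also have "\<dots> = map (\<lambda>k. arefl n (left_end k) (right_end k)) skip_list"
    by (rule map_cong) (simp_all add: set_skip_list tinv_Suc)
  finally show ?thesis .
qed

lemma prodw_r_of: "prodw (r_of n u) = lambda_n n"
  using prodw_sigma_prefix[of "n * (n - 1)"] upref_length prodw_sigma_word[OF two_le_n]
  by (simp add: r_of_def length_u del: upt_Suc)

lemma r_of_mem_factset: "r_of n u \<in> factset n (lambda_n n)"
  unfolding factset_def
  using length_skip_list prodw_r_of is_reflection_inversion by (auto simp: r_of_eq)

lemma left_end_next_skip:
  assumes "Suc i < length skip_list"
  shows "left_end (skip_list ! Suc i) = right_end (skip_list ! i)"
proof (rule left_end_after_skip)
  have "skip_list ! i \<in> set skip_list" "skip_list ! Suc i \<in> set skip_list"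
    using assms by (meson Suc_lessD nth_mem)+
  then show "skip (skip_list ! i)" "skip_list ! Suc i \<le> n * (n - 1)"
    by (simp_all add: set_skip_list)
  show "skip_list ! i < skip_list ! Suc i"
    using sorted_wrt_nth_less[of "(<)" skip_list i "Suc i"] assms
    by (simp add: skip_list_def sorted_wrt_filter)
  show "\<not> skip m" if "skip_list ! i < m" "m < skip_list ! Suc i" for m
    using filter_upt_between[of i skip 0 "n * (n - 1)" m] assms that by (simp add: skip_list_def)
qed

end

lemma identity_subwordI:
  assumes "2 \<le> n" and "u \<in> Sn n"
  shows "identity_subword n u"
proof unfold_locales
  fix k assume "k < n * (n - 1)"
  then show "u ! k = sigma n (Suc k) \<or> u ! k = id"
    using assms(2) by (auto simp: Sn_def dest!: bspec[of _ _ "Suc k"])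
qed (use assms in \<open>simp_all add: Sn_def\<close>)

theorem lemma5p14:
  fixes n :: nat and u :: "(int \<Rightarrow> int) list"
  assumes "n \<ge> 2" and "u \<in> Sn n"
  shows "tree_like n (r_of n u)"
proof -
  interpret identity_subword n u
    using assms by (rule identity_subwordI)
  show ?thesis
  proof (rule tree_likeI[OF r_of_mem_factset,
        where x = "\<lambda>i. left_end (skip_list ! i)" and y = "\<lambda>i. right_end (skip_list ! i)"])
    fix i assume i: "i < length (r_of n u)"
    then have "skip_list ! i \<in> set skip_list"
      by (simp add: r_of_eq)
    then show "left_end (skip_list ! i) < right_end (skip_list ! i)
      \<and> left_end (skip_list ! i) mod int n \<noteq> right_end (skip_list ! i) mod int n
      \<and> r_of n u ! i = arefl n (left_end (skip_list ! i)) (right_end (skip_list ! i))"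
      using i left_end_less_right_end left_end_mod_ne_right_end by (simp add: set_skip_list r_of_eq)
  next
    fix i assume "Suc i < length (r_of n u)"
    then show "left_end (skip_list ! Suc i) = right_end (skip_list ! i)"
      by (simp add: r_of_eq left_end_next_skip)
  qed
qed

end
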